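(* For every finite linear order $Y$, $\mathsf{rk}(Y)=\lfloor\log_2(|Y|+1)\rfloor$. In particular, for $n\in\omega$, $\mathsf{rk}(Y)\ge n$ if and only if $|Y|\ge 2^n-1$.
   Context: Let $\mathcal F$ be the class of finite linear orders (language $\{<\}$); substructures are suborders and $\mathsf{age}(X)$ is the set of finite suborders of a linear order $X$. For $A\le B$, $B$ is a prime extension of $A$ if $|B\setminus A|=1$; a realization of $B$ in $X$ (where $A\le X$) is $C\le X$ with $A\le C$ and an order-isomorphism $B\to C$ fixing $A$ pointwise. For $F\in\mathsf{age}(X)$ define by recursion: $\mathsf{rk}_X(F)\ge0$ always; $\mathsf{rk}_X(F)\ge\alpha+1$ iff every prime extension $B\in\mathcal F$ of $F$ has a realization $C$ in $X$ with $\mathsf{rk}_X(C)\ge\alpha$; for limit $\alpha$, $\mathsf{rk}_X(F)\ge\alpha$ iff $\mathsf{rk}_X(F)\ge\beta$ for all $\beta<\alpha$. $\mathsf{rk}_X(F)=\sup\{\alpha:\mathsf{rk}_X(F)\ge\alpha\}$ (or $\infty$ if this holds for all ordinals), and $\mathsf{rk}(X)=\mathsf{rk}_X(\emptyset)$. *)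

theory Defs
  imports Complex_Main
begin

text \<open>A linear order X is modelled as a set of elements of a linearly ordered type,
  with the induced order; suborders are subsets.  A prime extension B of a finite
  suborder F is, up to isomorphism over F, a strict linear order R on the carrier
  (Some ` F) \<union> {None} (the new point being None) which restricts to the order of F.\<close>

definition ext_carrier :: "'a set \<Rightarrow> 'a option set" where
  "ext_carrier F = insert None (Some ` F)"

definition prime_ext :: "'a::linorder set \<Rightarrow> ('a option \<Rightarrow> 'a option \<Rightarrow> bool) \<Rightarrow> bool" where
  "prime_ext F R \<longleftrightarrow>
     (\<forall>u\<in>ext_carrier F. \<not> R u u) \<and>
     (\<forall>u\<in>ext_carrier F. \<forall>v\<in>ext_carrier F. \<forall>w\<in>ext_carrier F. R u v \<longrightarrow> R v w \<longrightarrow> R u w) \<and>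
     (\<forall>u\<in>ext_carrier F. \<forall>v\<in>ext_carrier F. u \<noteq> v \<longrightarrow> R u v \<or> R v u) \<and>
     (\<forall>x\<in>F. \<forall>y\<in>F. R (Some x) (Some y) \<longleftrightarrow> x < y)"

definition realizes :: "'a::linorder set \<Rightarrow> 'a set \<Rightarrow> ('a option \<Rightarrow> 'a option \<Rightarrow> bool) \<Rightarrow> 'a set \<Rightarrow> bool" where
  "realizes X F R C \<longleftrightarrow> F \<subseteq> C \<and> C \<subseteq> X \<and>
     (\<exists>h. bij_betw h (ext_carrier F) C \<and>
          (\<forall>u\<in>ext_carrier F. \<forall>v\<in>ext_carrier F. R u v \<longleftrightarrow> h u < h v) \<and>
          (\<forall>x\<in>F. h (Some x) = x))"

text \<open>rk_ge X F n  means  rk_X(F) \<ge> n  (finite stages of the rank recursion).\<close>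
fun rk_ge :: "'a::linorder set \<Rightarrow> 'a set \<Rightarrow> nat \<Rightarrow> bool" where
  "rk_ge X F 0 = True"
| "rk_ge X F (Suc n) = (\<forall>R. prime_ext F R \<longrightarrow> (\<exists>C. realizes X F R C \<and> rk_ge X C n))"

end

theory Submission
  imports Defs
begin

text \<open>A prime extension R of F is determined by the cut L = cut_of F R of F below its new
  point, and it is realized in X precisely by the points of the gap of X between L and F - L.
  Adding such a point c to F splits that gap into its parts below and above c and leaves every
  other gap of F unchanged. Hence, by induction on n, rk_X(F) \<ge> n iff every gap of F in X has
  at least 2^n - 1 points: a gap of 2 (2^n - 1) + 1 points is exactly what is needed to place a
  point, e.g. a median, with 2^n - 1 points on either side. For F = {} the only gap is X.\<close>

lemma card_split_at:
  fixes G :: "'a::linorder set"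
  assumes "finite G" "c \<in> G"
  shows "card G = card {y\<in>G. y < c} + card {y\<in>G. c < y} + 1"
proof -
  let ?A = "{y\<in>G. y < c}" and ?B = "{y\<in>G. c < y}"
  have "G = insert c (?A \<union> ?B)"
    using assms(2) by auto
  moreover have "card (?A \<union> ?B) = card ?A + card ?B"
    using assms(1) by (intro card_Un_disjoint) auto
  moreover have "c \<notin> ?A \<union> ?B" "finite (?A \<union> ?B)"
    using assms(1) by auto
  ultimately show ?thesis
    by (metis Suc_eq_plus1 card_insert_disjoint)
qed

lemma ex_rank_eq:
  fixes G :: "'a::linorder set"
  assumes "finite G" "k < card G"
  shows "\<exists>c\<in>G. card {y\<in>G. y < c} = k"
proof -
  define rank where "rank c = card {y\<in>G. y < c}" for c
  have rank_mono: "rank c < rank d" if "c \<in> G" "c < d" for c d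
  proof -
    have "{y\<in>G. y < c} \<subseteq> {y\<in>G. y < d}"
      using that(2) by (blast intro: less_trans)
    moreover have "c \<in> {y\<in>G. y < d} - {y\<in>G. y < c}"
      using that by simp
    ultimately have "{y\<in>G. y < c} \<subset> {y\<in>G. y < d}"
      by blast
    then show ?thesis
      unfolding rank_def using assms(1) by (simp add: psubset_card_mono)
  qed
  have "inj_on rank G"
  proof (rule inj_onI)
    fix c d assume "c \<in> G" "d \<in> G" "rank c = rank d"
    then show "c = d"
      using rank_mono by (metis less_irrefl linorder_neqE)
  qed
  moreover have "rank ` G \<subseteq> {..<card G}"
  proof
    fix r assume "r \<in> rank ` G"
    then obtain c where "c \<in> G" "r = rank c" by blast
    then have "{y\<in>G. y < c} \<subset> G" by auto
    then show "r \<in> {..<card G}"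
      unfolding \<open>r = rank c\<close> rank_def using assms(1) by (simp add: psubset_card_mono)
  qed
  ultimately have "rank ` G = {..<card G}"
    by (simp add: card_image card_subset_eq)
  then have "k \<in> rank ` G"
    using assms(2) by simp
  then show ?thesis
    unfolding rank_def by blast
qed

lemma ex_median:
  fixes G :: "'a::linorder set"
  assumes "finite G" "2 * k + 1 \<le> card G"
  shows "\<exists>c\<in>G. k \<le> card {y\<in>G. y < c} \<and> k \<le> card {y\<in>G. c < y}"
proof -
  obtain c where "c \<in> G" "card {y\<in>G. y < c} = k"
    using ex_rank_eq[of G k] assms by auto
  then show ?thesis
    using card_split_at[OF assms(1) \<open>c \<in> G\<close>] assms(2) by auto
qed

definition is_cut :: "'a::linorder set \<Rightarrow> 'a set \<Rightarrow> bool" where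
  "is_cut F L \<longleftrightarrow> L \<subseteq> F \<and> (\<forall>x\<in>L. \<forall>y\<in>F. y < x \<longrightarrow> y \<in> L)"

lemma cut_less_noncut:
  assumes "is_cut F L" "x \<in> L" "y \<in> F - L"
  shows "x < y"
  using assms unfolding is_cut_def by (metis Diff_iff linorder_neqE)

lemma is_cut_restrict: "is_cut (insert c F) L' \<Longrightarrow> is_cut F (L' \<inter> F)"
  unfolding is_cut_def by auto

definition cut_ext :: "'a::linorder set \<Rightarrow> 'a option \<Rightarrow> 'a option \<Rightarrow> bool" where
  "cut_ext L u v = (case (u, v) of
      (Some x, Some y) \<Rightarrow> x < y
    | (Some x, None) \<Rightarrow> x \<in> L
    | (None, Some y) \<Rightarrow> y \<notin> L
    | (None, None) \<Rightarrow> False)"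

definition cut_of :: "'a set \<Rightarrow> ('a option \<Rightarrow> 'a option \<Rightarrow> bool) \<Rightarrow> 'a set" where
  "cut_of F R = {x\<in>F. R (Some x) None}"

lemma cut_ext_trans:
  assumes "is_cut F L" "u \<in> ext_carrier F" "v \<in> ext_carrier F" "w \<in> ext_carrier F"
    "cut_ext L u v" "cut_ext L v w"
  shows "cut_ext L u w"
proof (cases u; cases v; cases w)
  fix x y assume "u = Some x" "v = Some y" "w = None"
  with assms show ?thesis unfolding is_cut_def ext_carrier_def cut_ext_def by auto
next
  fix y z assume "u = None" "v = Some y" "w = Some z"
  with assms show ?thesis unfolding is_cut_def ext_carrier_def cut_ext_def by auto
next
  fix x z assume "u = Some x" "v = None" "w = Some z"
  with assms cut_less_noncut[OF assms(1)] show ?thesis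
    unfolding ext_carrier_def cut_ext_def by auto
qed (use assms in \<open>auto simp: cut_ext_def\<close>)

lemma prime_ext_cut_ext:
  assumes "is_cut F L"
  shows "prime_ext F (cut_ext L)"
proof -
  have "\<not> cut_ext L u u" for u
    unfolding cut_ext_def by (cases u) auto
  moreover have "cut_ext L u v \<or> cut_ext L v u" if "u \<noteq> v" for u v
    using that unfolding cut_ext_def by (cases u; cases v) auto
  moreover have "cut_ext L (Some x) (Some y) \<longleftrightarrow> x < y" for x y
    by (simp add: cut_ext_def)
  ultimately show ?thesis
    using cut_ext_trans[OF assms] unfolding prime_ext_def by blast
qed

lemma cut_of_cut_ext: "L \<subseteq> F \<Longrightarrow> cut_of F (cut_ext L) = L"
  by (auto simp: cut_of_def cut_ext_def)

lemma prime_ext_irrefl: "prime_ext F R \<Longrightarrow> \<not> R None None"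
  by (simp add: prime_ext_def ext_carrier_def)

lemma prime_ext_Some_Some:
  "prime_ext F R \<Longrightarrow> x \<in> F \<Longrightarrow> y \<in> F \<Longrightarrow> R (Some x) (Some y) \<longleftrightarrow> x < y"
  by (simp add: prime_ext_def)

lemma prime_ext_None_Some:
  assumes "prime_ext F R" "x \<in> F"
  shows "R None (Some x) \<longleftrightarrow> \<not> R (Some x) None"
proof -
  have "None \<in> ext_carrier F" "Some x \<in> ext_carrier F"
    using assms(2) by (auto simp: ext_carrier_def)
  then show ?thesis
    using assms(1) unfolding prime_ext_def by (metis option.distinct(1))
qed

lemma is_cut_cut_of:
  assumes "prime_ext F R"
  shows "is_cut F (cut_of F R)"
proof -
  have "R (Some y) None" if "R (Some x) None" "x \<in> F" "y \<in> F" "y < x" for x y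
  proof -
    have "R (Some y) (Some x)"
      using prime_ext_Some_Some[OF assms] that by blast
    then show ?thesis
      using assms that unfolding prime_ext_def ext_carrier_def by blast
  qed
  then show ?thesis unfolding is_cut_def cut_of_def by blast
qed

definition gap :: "'a::linorder set \<Rightarrow> 'a set \<Rightarrow> 'a set \<Rightarrow> 'a set" where
  "gap X F L = {y\<in>X. (\<forall>x\<in>L. x < y) \<and> (\<forall>x\<in>F - L. y < x)}"

lemma finite_gap: "finite X \<Longrightarrow> finite (gap X F L)"
  unfolding gap_def by simp

lemma not_in_gap: "c \<in> gap X F L \<Longrightarrow> c \<notin> F"
  unfolding gap_def by (metis (no_types, lifting) Diff_iff less_irrefl mem_Collect_eq)

lemma gap_separated:
  assumes "x \<in> F" "x \<in> L2 - L1" "y1 \<in> gap X F L1" "y2 \<in> gap X F L2"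
  shows "y1 < y2"
proof -
  have "y1 < x" "x < y2"
    using assms unfolding gap_def by auto
  then show ?thesis by (rule less_trans)
qed

lemma is_cut_insert_gap:
  assumes "is_cut F L" "c \<in> gap X F L"
  shows "is_cut (insert c F) L" "is_cut (insert c F) (insert c L)"
  using assms unfolding is_cut_def gap_def by (auto dest: less_asym less_trans)

lemma gap_insert:
  assumes "L' \<subseteq> insert c F"
  shows "gap X (insert c F) L' = {y \<in> gap X F (L' \<inter> F). if c \<in> L' then c < y else y < c}"
  using assms unfolding gap_def by auto

lemma gap_insert_other_cut:
  assumes L: "is_cut F L" and c: "c \<in> gap X F L"
    and L': "is_cut (insert c F) L'" and ne: "L' \<inter> F \<noteq> L"
  shows "gap X (insert c F) L' = gap X F (L' \<inter> F)"
proof -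
  have L'_sub: "L' \<subseteq> insert c F" and L_sub: "L \<subseteq> F"
    using L L' unfolding is_cut_def by auto
  have below_c: "x < c" if "x \<in> L" for x
    using c that unfolding gap_def by blast
  have above_c: "c < x" if "x \<in> F" "x \<notin> L" for x
    using c that unfolding gap_def by blast
  have down: "y \<in> L'" if "x \<in> L'" "y \<in> insert c F" "y < x" for x y
    using L' that unfolding is_cut_def by blast
  show ?thesis
  proof (cases "c \<in> L'")
    case True
    then have "L \<subseteq> L' \<inter> F"
      using L_sub below_c down by blast
    then obtain x where x: "x \<in> F" "x \<in> (L' \<inter> F) - L"
      using ne by blast
    have "c < y" if "y \<in> gap X F (L' \<inter> F)" for y
      using x c that by (rule gap_separated)
    then show ?thesis
      using gap_insert[OF L'_sub] True by auto
  next
    case False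
    then have "L' \<inter> F \<subseteq> L"
      using above_c down by blast
    then obtain x where x: "x \<in> F" "x \<in> L - (L' \<inter> F)"
      using ne L_sub by blast
    have "y < c" if "y \<in> gap X F (L' \<inter> F)" for y
      using x that c by (rule gap_separated)
    then show ?thesis
      using gap_insert[OF L'_sub] False by auto
  qed
qed

lemma realizes_iff_gap:
  assumes R: "prime_ext F R" and "F \<subseteq> X"
  shows "realizes X F R C \<longleftrightarrow> (\<exists>c\<in>gap X F (cut_of F R). C = insert c F)"
proof
  assume "realizes X F R C"
  then obtain h where h: "bij_betw h (ext_carrier F) C"
    "\<forall>u\<in>ext_carrier F. \<forall>v\<in>ext_carrier F. R u v \<longleftrightarrow> h u < h v" "\<forall>x\<in>F. h (Some x) = x"
    and "C \<subseteq> X"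
    unfolding realizes_def by blast
  have C: "C = insert (h None) F"
    using h(1,3) unfolding bij_betw_def ext_carrier_def by force
  have "h None \<in> gap X F (cut_of F R)"
    using h(2,3) prime_ext_None_Some[OF R] C \<open>C \<subseteq> X\<close>
    unfolding gap_def cut_of_def ext_carrier_def by auto
  with C show "\<exists>c\<in>gap X F (cut_of F R). C = insert c F" by blast
next
  assume "\<exists>c\<in>gap X F (cut_of F R). C = insert c F"
  then obtain c where c: "c \<in> gap X F (cut_of F R)" and C: "C = insert c F" by blast
  have below: "R (Some x) None \<longleftrightarrow> x < c" if "x \<in> F" for x
    using c that unfolding gap_def cut_of_def by (auto dest: less_asym)
  have above: "R None (Some x) \<longleftrightarrow> c < x" if "x \<in> F" for x
    using below[OF that] prime_ext_None_Some[OF R that] not_in_gap[OF c] that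
    by (metis less_asym linorder_neqE)
  define h where "h = case_option c id"
  have "inj_on h (ext_carrier F)"
    using not_in_gap[OF c] unfolding inj_on_def ext_carrier_def h_def by auto
  moreover have "h ` ext_carrier F = C"
    unfolding C ext_carrier_def h_def by (simp add: image_image)
  ultimately have "bij_betw h (ext_carrier F) C"
    unfolding bij_betw_def by blast
  moreover have "R u v \<longleftrightarrow> h u < h v" if "u \<in> ext_carrier F" "v \<in> ext_carrier F" for u v
    using that below above prime_ext_irrefl[OF R] prime_ext_Some_Some[OF R]
    unfolding ext_carrier_def h_def by (cases u; cases v) auto
  moreover have "F \<subseteq> C" "C \<subseteq> X"
    using c \<open>F \<subseteq> X\<close> unfolding C gap_def by auto
  ultimately show "realizes X F R C"
    unfolding realizes_def h_def by auto
qed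

definition gaps_ge :: "'a::linorder set \<Rightarrow> 'a set \<Rightarrow> nat \<Rightarrow> bool" where
  "gaps_ge X F k \<longleftrightarrow> (\<forall>L. is_cut F L \<longrightarrow> k \<le> card (gap X F L))"

lemma gaps_ge_mono: "gaps_ge X F k \<Longrightarrow> j \<le> k \<Longrightarrow> gaps_ge X F j"
  unfolding gaps_ge_def by (blast intro: le_trans)

lemma gaps_ge_empty: "gaps_ge X {} k \<longleftrightarrow> k \<le> card X"
proof -
  have "is_cut {} L \<longleftrightarrow> L = {}" for L :: "'a set"
    by (auto simp: is_cut_def)
  moreover have "gap X {} {} = X"
    by (auto simp: gap_def)
  ultimately show ?thesis
    unfolding gaps_ge_def by auto
qed

lemma card_gap_ge_if_gaps_ge_insert:
  assumes "finite X" "is_cut F L" "c \<in> gap X F L" "gaps_ge X (insert c F) k"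
  shows "2 * k + 1 \<le> card (gap X F L)"
proof -
  have "c \<notin> F" "L \<subseteq> F"
    using not_in_gap[OF assms(3)] assms(2) unfolding is_cut_def by auto
  then have "L \<inter> F = L" "insert c L \<inter> F = L" "c \<notin> L"
    by auto
  moreover have "L \<subseteq> insert c F" "insert c L \<subseteq> insert c F"
    using \<open>L \<subseteq> F\<close> by auto
  ultimately have "gap X (insert c F) L = {y \<in> gap X F L. y < c}"
    and "gap X (insert c F) (insert c L) = {y \<in> gap X F L. c < y}"
    using gap_insert[of L c F X] gap_insert[of "insert c L" c F X] by simp_all
  then have "k \<le> card {y \<in> gap X F L. y < c}" "k \<le> card {y \<in> gap X F L. c < y}"
    using assms(4) is_cut_insert_gap[OF assms(2,3)] unfolding gaps_ge_def by metis+
  then show ?thesis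
    using card_split_at[OF finite_gap[OF assms(1)] assms(3)] by linarith
qed

lemma gaps_ge_insert:
  assumes L: "is_cut F L" and c: "c \<in> gap X F L" and "gaps_ge X F k"
    and "k \<le> card {y \<in> gap X F L. y < c}" "k \<le> card {y \<in> gap X F L. c < y}"
  shows "gaps_ge X (insert c F) k"
  unfolding gaps_ge_def
proof (intro allI impI)
  fix L' assume L': "is_cut (insert c F) L'"
  show "k \<le> card (gap X (insert c F) L')"
  proof (cases "L' \<inter> F = L")
    case True
    have "L' \<subseteq> insert c F"
      using L' unfolding is_cut_def by blast
    then show ?thesis
      using gap_insert[of L' c F X] True assms(4,5) by (cases "c \<in> L'") simp_all
  next
    case False
    then show ?thesis
      using gap_insert_other_cut[OF L c L'] is_cut_restrict[OF L'] assms(3)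
      unfolding gaps_ge_def by simp
  qed
qed

lemma rk_ge_iff_gaps_ge:
  assumes "finite X" "F \<subseteq> X"
  shows "rk_ge X F n \<longleftrightarrow> gaps_ge X F (2 ^ n - 1)"
  using assms(2)
proof (induction n arbitrary: F)
  case 0
  then show ?case by (simp add: gaps_ge_def)
next
  case (Suc n)
  let ?k = "2 ^ n - 1 :: nat"
  have k: "2 ^ Suc n - 1 = 2 * ?k + 1"
    using one_le_power[of "2::nat" n] unfolding power_Suc by linarith
  have IH: "rk_ge X (insert c F) n \<longleftrightarrow> gaps_ge X (insert c F) ?k" if "c \<in> gap X F L" for c L
  proof -
    have "insert c F \<subseteq> X"
      using that Suc.prems unfolding gap_def by blast
    then show ?thesis by (rule Suc.IH)
  qed
  show ?case
  proof
    assume rk: "rk_ge X F (Suc n)"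
    show "gaps_ge X F (2 ^ Suc n - 1)"
      unfolding gaps_ge_def k
    proof (intro allI impI)
      fix L assume L: "is_cut F L"
      have R: "prime_ext F (cut_ext L)"
        using L by (rule prime_ext_cut_ext)
      with rk obtain C where C: "realizes X F (cut_ext L) C" "rk_ge X C n"
        by auto
      have "cut_of F (cut_ext L) = L"
        using L unfolding is_cut_def by (simp add: cut_of_cut_ext)
      then obtain c where c: "c \<in> gap X F L" "C = insert c F"
        using C(1) realizes_iff_gap[OF R Suc.prems] by auto
      then have "gaps_ge X (insert c F) ?k"
        using C(2) IH by blast
      then show "2 * ?k + 1 \<le> card (gap X F L)"
        by (rule card_gap_ge_if_gaps_ge_insert[OF assms(1) L c(1)])
    qed
  next
    assume gaps: "gaps_ge X F (2 ^ Suc n - 1)"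
    show "rk_ge X F (Suc n)"
      unfolding rk_ge.simps
    proof (intro allI impI)
      fix R assume R: "prime_ext F R"
      let ?G = "gap X F (cut_of F R)"
      have "2 * ?k + 1 \<le> card ?G"
        using gaps is_cut_cut_of[OF R] unfolding gaps_ge_def k by blast
      then obtain c where c: "c \<in> ?G" "?k \<le> card {y\<in>?G. y < c}" "?k \<le> card {y\<in>?G. c < y}"
        using ex_median[OF finite_gap[OF assms(1)]] by blast
      have "gaps_ge X F ?k"
        using gaps by (rule gaps_ge_mono) (simp add: k)
      then have "gaps_ge X (insert c F) ?k"
        by (rule gaps_ge_insert[OF is_cut_cut_of[OF R] c(1) _ c(2,3)])
      then have "rk_ge X (insert c F) n"
        using IH[OF c(1)] by blast
      moreover have "realizes X F R (insert c F)"
        using realizes_iff_gap[OF R Suc.prems] c(1) by blast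
      ultimately show "\<exists>C. realizes X F R C \<and> rk_ge X C n"
        by blast
    qed
  qed
qed

lemma le_floor_log2_iff: "n \<le> nat \<lfloor>log 2 (real m + 1)\<rfloor> \<longleftrightarrow> 2 ^ n \<le> m + 1"
proof -
  have "n \<le> nat \<lfloor>log 2 (real m + 1)\<rfloor> \<longleftrightarrow> real n \<le> log 2 (real m + 1)"
    by (simp add: le_nat_iff le_floor_iff)
  also have "\<dots> \<longleftrightarrow> 2 powr real n \<le> real m + 1"
    by (subst le_log_iff) auto
  also have "\<dots> \<longleftrightarrow> real (2 ^ n) \<le> real (m + 1)"
    by (simp add: powr_realpow add.commute)
  also have "\<dots> \<longleftrightarrow> 2 ^ n \<le> m + 1"
    by (rule of_nat_le_iff)
  finally show ?thesis .
qed

theorem theorem6p4: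
  fixes Y :: "'a::linorder set"
  assumes "finite Y"
  shows "(\<forall>n::nat. rk_ge Y {} n \<longleftrightarrow> n \<le> nat \<lfloor>log 2 (real (card Y) + 1)\<rfloor>)
       \<and> (\<forall>n::nat. rk_ge Y {} n \<longleftrightarrow> card Y \<ge> 2 ^ n - 1)"
proof -
  have rk: "rk_ge Y {} n \<longleftrightarrow> 2 ^ n - 1 \<le> card Y" for n
    using rk_ge_iff_gaps_ge[OF assms empty_subsetI] gaps_ge_empty by blast
  have "2 ^ n - 1 \<le> card Y \<longleftrightarrow> 2 ^ n \<le> card Y + 1" for n :: nat
    using one_le_power[of "2::nat" n] by linarith
  then show ?thesis
    using rk le_floor_log2_iff by auto
qed

end
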